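(* Let $p$ be an odd prime, $n$ an odd integer, and let $r,t$ and $v,w$ be pairs of integers satisfying $\gcd(n,r+t)=\gcd(n,r-t)=\gcd(n,p)=1$ and $\gcd(n,v+w)=\gcd(n,v-w)=1$. Let $u$ be a primitive $n$-th root of unity in an extension of $\mathbb{F}_p$, and set $\lambda_j^{(r,t)}=u^{(n-r)j}-u^{(n-t)j}$ for $j=0,\ldots,n-1$. Then \[\prod_{j=1}^{n-1}\lambda_j^{(r,t)}=\prod_{j=1}^{n-1}\lambda_j^{(v,w)}.\] *)

theory Defs
  imports "HOL-Computational_Algebra.Primes"
begin

definition primitive_root_of_unity :: "nat \<Rightarrow> 'a::field \<Rightarrow> bool" where
  "primitive_root_of_unity n u \<longleftrightarrow> 0 < n \<and> u ^ n = 1 \<and> (\<forall>k. 0 < k \<and> k < n \<longrightarrow> u ^ k \<noteq> 1)"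

definition lam :: "nat \<Rightarrow> 'a::field \<Rightarrow> int \<Rightarrow> int \<Rightarrow> nat \<Rightarrow> 'a" where
  "lam n u r t j = u powi ((int n - r) * int j) - u powi ((int n - t) * int j)"

end

theory Submission
  imports Defs "HOL-Number_Theory.Cong"
begin

(*
  Only u^n = 1 with n odd and gcd(n, r - t) = 1 is needed.
  Writing d = t - r, every factor splits as
      lam n u r t j = u^(-t j) * (u^(d j) - 1).
  The unit factors multiply to u^(-t (1 + ... + (n-1))) = u^(-t n (n-1)/2) = 1,
  since n is odd and u^n = 1.  Because d is coprime to n, j |-> d j mod n permutes
  the nonzero residues {1..n-1}, so the remaining product is the normal form
      prod_{j=1}^{n-1} (u^j - 1),
  which does not depend on (r, t).
*)

lemma root_of_unity_nonzero:
  fixes u :: "'a::field"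
  assumes "u ^ n = 1" "n > 0"
  shows "u \<noteq> 0"
  using assms by (cases n) auto

lemma powi_add_multiple:
  fixes u :: "'a::field"
  assumes "u ^ n = 1" "n > 0"
  shows "u powi (k + int n * m) = u powi k"
proof -
  have "u powi (k + int n * m) = u powi k * u powi (int n * m)"
    using root_of_unity_nonzero[OF assms] by (simp add: power_int_add)
  also have "u powi (int n * m) = 1"
    by (simp add: power_int_mult assms(1))
  finally show ?thesis by simp
qed

lemma powi_eq_power_mod:
  fixes u :: "'a::field"
  assumes "u ^ n = 1" "n > 0"
  shows "u powi k = u ^ nat (k mod int n)"
proof -
  have "u powi k = u powi (k mod int n + int n * (k div int n))" by simp
  also have "\<dots> = u powi (k mod int n)" by (rule powi_add_multiple[OF assms])
  also have "\<dots> = u ^ nat (k mod int n)"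
    using assms(2) by (simp add: power_int_def)
  finally show ?thesis .
qed

lemma prod_powi:
  fixes u :: "'a::field"
  assumes "u \<noteq> 0" "finite A"
  shows "(\<Prod>j\<in>A. u powi f j) = u powi (\<Sum>j\<in>A. f j)"
  using assms(2) by (induction A rule: finite_induct) (auto simp: power_int_add assms(1))

lemma lam_factor:
  fixes u :: "'a::field"
  assumes "u ^ n = 1" "n > 0"
  shows "lam n u r t j = u powi (- t * int j) * (u powi ((t - r) * int j) - 1)"
proof -
  have u0: "u \<noteq> 0" by (rule root_of_unity_nonzero[OF assms])
  have r: "u powi ((int n - r) * int j) = u powi (- r * int j)"
    using powi_add_multiple[OF assms, of "- r * int j" "int j"] by (simp add: algebra_simps)
  have t: "u powi ((int n - t) * int j) = u powi (- t * int j)"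
    using powi_add_multiple[OF assms, of "- t * int j" "int j"] by (simp add: algebra_simps)
  have "u powi (- r * int j) = u powi (- t * int j) * u powi ((t - r) * int j)"
    using u0 by (simp add: power_int_add[symmetric] algebra_simps)
  then show ?thesis unfolding lam_def r t by (simp add: algebra_simps)
qed

lemma odd_gauss_sum:
  fixes n :: nat
  assumes "odd n"
  shows "(\<Sum>j=1..n-1. j) = n * ((n - 1) div 2)"
proof -
  obtain m where n: "n = 2 * m + 1" using assms by (rule oddE)
  have "2 * (\<Sum>j=Suc 0..2*m. j) = 2 * m * (2 * m + 1)"
    using double_gauss_sum_from_Suc_0[of "2*m", where 'a=nat] by simp
  then have "(\<Sum>j=Suc 0..2*m. j) = m * (2 * m + 1)" by linarith
  then show ?thesis using n by simp
qed

lemma prod_powi_linear_eq_1: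
  fixes u :: "'a::field"
  assumes "u ^ n = 1" "odd n"
  shows "(\<Prod>j=1..n-1. u powi (c * int j)) = 1"
proof -
  have n0: "n > 0" using assms(2) by (cases n) auto
  have "(\<Prod>j=1..n-1. u powi (c * int j)) = u powi (\<Sum>j=1..n-1. c * int j)"
    by (rule prod_powi[OF root_of_unity_nonzero[OF assms(1) n0]]) simp
  also have "(\<Sum>j=1..n-1. c * int j) = c * int (\<Sum>j=1..n-1. j)"
    by (simp add: sum_distrib_left)
  also have "\<dots> = c * int (n * ((n - 1) div 2))"
    by (simp only: odd_gauss_sum[OF assms(2)])
  also have "\<dots> = 0 + int n * (c * int ((n - 1) div 2))"
    by (simp add: algebra_simps)
  also have "u powi \<dots> = 1"
    using powi_add_multiple[OF assms(1) n0, of 0] by simp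
  finally show ?thesis .
qed

lemma mult_mod_permutes_nonzero_residues:
  fixes d :: int
  assumes "coprime d (int n)"
  shows "bij_betw (\<lambda>j. nat ((d * int j) mod int n)) {1..n-1} {1..n-1}"
proof (cases "n = 0")
  case True
  then show ?thesis by (simp add: bij_betw_def)
next
  case False
  then have n0: "n > 0" by simp
  define h where "h j = nat ((d * int j) mod int n)" for j
  have into: "h ` {1..n-1} \<subseteq> {1..n-1}"
  proof
    fix x assume "x \<in> h ` {1..n-1}"
    then obtain j where j: "j \<in> {1..n-1}" "x = h j" by auto
    have "\<not> int n dvd d * int j"
    proof
      assume "int n dvd d * int j"
      then have "n dvd j"
        using assms by (metis coprime_commute coprime_dvd_mult_right_iff of_nat_dvd_iff)
      then show False using j by (auto dest: dvd_imp_le)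
    qed
    then have "(d * int j) mod int n \<noteq> 0" by auto
    moreover have "0 \<le> (d * int j) mod int n" "(d * int j) mod int n < int n" using n0 by auto
    moreover have "int (h j) = (d * int j) mod int n" unfolding h_def using n0 by simp
    ultimately have "1 \<le> h j" "h j < n" by linarith+
    then show "x \<in> {1..n-1}" using j by auto
  qed
  have inj: "inj_on h {1..n-1}"
  proof
    fix a b assume ab: "a \<in> {1..n-1}" "b \<in> {1..n-1}" "h a = h b"
    then have "[d * int a = d * int b] (mod int n)"
      using n0 unfolding h_def cong_def by (simp add: nat_eq_iff2)
    then have "[a = b] (mod n)"
      using cong_mult_lcancel[OF assms] by (simp add: cong_int_iff)
    then show "a = b" using ab cong_less_modulus_unique_nat[of a b n] by auto
  qed
  have "h ` {1..n-1} = {1..n-1}" using endo_inj_surj[OF _ into inj] by simp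
  with inj show ?thesis unfolding h_def[symmetric] by (simp add: bij_betw_def)
qed

lemma prod_lam_normal_form:
  fixes u :: "'a::field" and n :: nat and r t :: int
  assumes "odd n" "gcd (int n) (r - t) = 1" "u ^ n = 1"
  shows "(\<Prod>j=1..n-1. lam n u r t j) = (\<Prod>j=1..n-1. u ^ j - 1)"
proof -
  have n0: "n > 0" using assms(1) by (cases n) auto
  define d where "d = t - r"
  have cop: "coprime d (int n)"
    using assms(2) unfolding d_def
    by (metis coprime_iff_gcd_eq_1 coprime_commute coprime_minus_right_iff minus_diff_eq)
  have "(\<Prod>j=1..n-1. lam n u r t j)
      = (\<Prod>j=1..n-1. u powi (- t * int j)) * (\<Prod>j=1..n-1. u powi (d * int j) - 1)"
    by (simp add: lam_factor[OF assms(3) n0] d_def prod.distrib)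
  also have "(\<Prod>j=1..n-1. u powi (- t * int j)) = 1"
    by (rule prod_powi_linear_eq_1[OF assms(3,1)])
  also have "(\<Prod>j=1..n-1. u powi (d * int j) - 1)
      = (\<Prod>j=1..n-1. u ^ nat ((d * int j) mod int n) - 1)"
    by (simp add: powi_eq_power_mod[OF assms(3) n0])
  also have "\<dots> = (\<Prod>j=1..n-1. u ^ j - 1)"
    using prod.reindex_bij_betw[OF mult_mod_permutes_nonzero_residues[OF cop], of "\<lambda>j. u ^ j - 1"]
    by simp
  finally show ?thesis by simp
qed

theorem lemma3:
  fixes u :: "'a::field" and p n :: nat and r t v w :: int
  assumes "prime p" and "odd p" and "CHAR('a) = p"
    and "odd n"
    and "gcd (int n) (r + t) = 1" and "gcd (int n) (r - t) = 1" and "gcd n p = 1"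
    and "gcd (int n) (v + w) = 1" and "gcd (int n) (v - w) = 1"
    and "primitive_root_of_unity n u"
  shows "(\<Prod>j=1..n-1. lam n u r t j) = (\<Prod>j=1..n-1. lam n u v w j)"
proof -
  have "u ^ n = 1" using assms(10) unfolding primitive_root_of_unity_def by simp
  then show ?thesis
    using prod_lam_normal_form[OF assms(4) assms(6), of u]
      prod_lam_normal_form[OF assms(4) assms(9), of u]
    by simp
qed

end
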